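(* Let $T$ be a self-affine lattice tile such that $T+\mathbb Z^n$ is a tiling of $\mathbb R^n$, with neighbor graph $G=(V,E)$, and assume all neighbors are compatible. For $u\in V\setminus\{0\}$ the following are equivalent: (a) $B_u$ is a face of $T$; (b) $B_u\not\subseteq\bigcup_{v\in V\setminus\{0,u\}}B_v$; (c) there is a finite word $\mathbf w$ over $\{1,\dots,m\}$ which is the label sequence of some directed path in $G$ starting at $u$, but is not the label sequence of any directed path in $G$ starting at any $v\in V\setminus\{0,u\}$.
   Context: Setting: $M$ is an $n\times n$ integer matrix all of whose eigenvalues have modulus $>1$, $m=|\det M|$, $k_1,\dots,k_m\in\mathbb R^n$ with $k_j-k_1\in\mathbb Z^n$ forming a complete set of residues of $\mathbb Z^n$ modulo $M\mathbb Z^n$; $f_j(x)=M^{-1}(x+k_j)$, $T=\bigcup_j f_j(T)$ compact nonempty. $B_k=T\cap(T+k)$. Neighbor graph $G=(V,E)$: $V=\{k\in\mathbb Z^n:B_k\ne\emptyset\}$; for $k,k'\in V$, an edge from $k$ to $k'$ with label $i$ iff $k'=Mk+k_j-k_i$ for some $j$. The label sequence of a path $e_1e_2\dots$ is the sequence of labels of its edges. All neighbors are compatible if every vertex $k\ne0$ of $G$ has, for each $j\in\{1,\dots,m\}$, an incoming edge with label $j$. $B_k$ ($k\ne0$) is a face of $T$ if there are $x\in B_k$ and an open neighborhood $U$ of $x$ with $U\cap\partial T\subseteq B_k$ and $U\subseteq T\cup(T+k)$. *)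

theory Defs
  imports "HOL-Analysis.Analysis"
begin

definition int_vecs :: "(real ^ 'n) set" where
  "int_vecs = {x. \<forall>i. x $ i \<in> \<int>}"

definition cmat :: "real ^ 'n ^ 'n \<Rightarrow> complex ^ 'n ^ 'n" where
  "cmat M = (\<chi> i j. complex_of_real (M $ i $ j))"

definition is_eigenvalue :: "real ^ 'n ^ 'n \<Rightarrow> complex \<Rightarrow> bool" where
  "is_eigenvalue M c \<longleftrightarrow> (\<exists>v::complex ^ 'n. v \<noteq> 0 \<and> cmat M *v v = c *s v)"

definition sa_setting ::
  "real ^ 'n ^ 'n \<Rightarrow> nat \<Rightarrow> (nat \<Rightarrow> real ^ 'n) \<Rightarrow> (real ^ 'n) set \<Rightarrow> bool" where
  "sa_setting M m k T \<longleftrightarrow>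
     (\<forall>i j. M $ i $ j \<in> \<int>) \<and>
     (\<forall>c. is_eigenvalue M c \<longrightarrow> norm c > 1) \<and>
     real m = \<bar>det M\<bar> \<and>
     (\<forall>j\<in>{1..m}. k j - k 1 \<in> int_vecs) \<and>
     (\<forall>z\<in>int_vecs. \<exists>!j. j \<in> {1..m} \<and> (\<exists>w\<in>int_vecs. z - (k j - k 1) = M *v w)) \<and>
     compact T \<and> T \<noteq> {} \<and>
     T = (\<Union>j\<in>{1..m}. (\<lambda>x. matrix_inv M *v (x + k j)) ` T)"

definition lattice_tiling :: "(real ^ 'n) set \<Rightarrow> bool" where
  "lattice_tiling T \<longleftrightarrow>
     T = closure (interior T) \<and>
     (\<Union>z\<in>int_vecs. (\<lambda>x. x + z) ` T) = UNIV \<and>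
     (\<forall>z\<in>int_vecs. \<forall>z'\<in>int_vecs. z \<noteq> z' \<longrightarrow>
        interior ((\<lambda>x. x + z) ` T) \<inter> interior ((\<lambda>x. x + z') ` T) = {})"

definition Bset :: "(real ^ 'n) set \<Rightarrow> real ^ 'n \<Rightarrow> (real ^ 'n) set" where
  "Bset T u = T \<inter> (\<lambda>x. x + u) ` T"

definition nb_vertices :: "(real ^ 'n) set \<Rightarrow> (real ^ 'n) set" where
  "nb_vertices T = {u \<in> int_vecs. Bset T u \<noteq> {}}"

definition nb_edge ::
  "real ^ 'n ^ 'n \<Rightarrow> nat \<Rightarrow> (nat \<Rightarrow> real ^ 'n) \<Rightarrow> (real ^ 'n) set \<Rightarrow>
   real ^ 'n \<Rightarrow> real ^ 'n \<Rightarrow> nat \<Rightarrow> bool" where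
  "nb_edge M m k T u u' i \<longleftrightarrow>
     u \<in> nb_vertices T \<and> u' \<in> nb_vertices T \<and> i \<in> {1..m} \<and>
     (\<exists>j\<in>{1..m}. u' = M *v u + k j - k i)"

fun path_word ::
  "real ^ 'n ^ 'n \<Rightarrow> nat \<Rightarrow> (nat \<Rightarrow> real ^ 'n) \<Rightarrow> (real ^ 'n) set \<Rightarrow>
   real ^ 'n \<Rightarrow> nat list \<Rightarrow> bool" where
  "path_word M m k T u [] \<longleftrightarrow> u \<in> nb_vertices T"
| "path_word M m k T u (i # w) \<longleftrightarrow> (\<exists>u'. nb_edge M m k T u u' i \<and> path_word M m k T u' w)"

definition all_compatible ::
  "real ^ 'n ^ 'n \<Rightarrow> nat \<Rightarrow> (nat \<Rightarrow> real ^ 'n) \<Rightarrow> (real ^ 'n) set \<Rightarrow> bool" where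
  "all_compatible M m k T \<longleftrightarrow>
     (\<forall>u\<in>nb_vertices T. u \<noteq> 0 \<longrightarrow> (\<forall>j\<in>{1..m}. \<exists>u'. nb_edge M m k T u' u j))"

definition is_face :: "(real ^ 'n) set \<Rightarrow> real ^ 'n \<Rightarrow> bool" where
  "is_face T u \<longleftrightarrow>
     (\<exists>x\<in>Bset T u. \<exists>U. open U \<and> x \<in> U \<and> U \<inter> frontier T \<subseteq> Bset T u \<and>
        U \<subseteq> T \<union> (\<lambda>y. y + u) ` T)"

end

theory Submission
  imports Defs Jordan_Normal_Form.Spectral_Radius
begin

(* The proof has three ingredients, developed in this order.
   1. Linear algebra: since M is expanding, the powers of M^{-1} contract geometrically. *)

no_notation Matrix.vec_index (infixl "$" 100)
hide_const (open) Matrix.mat Matrix.vec Determinant.det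

lemma smult_mat_mult_vec:
  assumes "B \<in> carrier_mat n n" and "v \<in> carrier_vec n"
  shows "(c \<cdot>\<^sub>m B) *\<^sub>v v = (c :: 'a :: comm_ring_1) \<cdot>\<^sub>v (B *\<^sub>v v)"
  by (rule eq_vecI) (use assms in auto)

lemma eigenvalue_smult_mat:
  fixes B :: "'a :: field mat"
  assumes B: "B \<in> carrier_mat n n" and ev: "eigenvalue B l"
  shows "eigenvalue (c \<cdot>\<^sub>m B) (c * l)"
proof -
  from ev obtain v where v: "v \<in> carrier_vec n" "v \<noteq> 0\<^sub>v n" "B *\<^sub>v v = l \<cdot>\<^sub>v v"
    using B unfolding eigenvalue_def eigenvector_def by auto
  have "(c \<cdot>\<^sub>m B) *\<^sub>v v = (c * l) \<cdot>\<^sub>v v"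
    using smult_mat_mult_vec[OF B v(1)] v(3) by (simp add: smult_smult_assoc)
  then show ?thesis using B v unfolding eigenvalue_def eigenvector_def by auto
qed

lemma pow_smult_mat:
  fixes B :: "'a :: comm_semiring_1 mat"
  assumes B: "B \<in> carrier_mat n n"
  shows "(c \<cdot>\<^sub>m B) ^\<^sub>m k = c ^ k \<cdot>\<^sub>m (B ^\<^sub>m k)"
proof (induction k)
  case 0
  show ?case using B by (auto intro!: eq_matI)
next
  case (Suc k)
  have P: "B ^\<^sub>m k \<in> carrier_mat n n" using B by simp
  have "(c \<cdot>\<^sub>m B) ^\<^sub>m Suc k = c ^ k \<cdot>\<^sub>m (c \<cdot>\<^sub>m (B ^\<^sub>m k * B))"
    using Suc mult_smult_assoc_mat[OF P smult_carrier_mat[OF B]] mult_smult_distrib[OF P B] by simp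
  also have "\<dots> = c ^ Suc k \<cdot>\<^sub>m (B ^\<^sub>m Suc k)"
    by (rule eq_matI) (auto simp: ac_simps)
  finally show ?case .
qed

(* Choose r strictly between the spectral radius and 1;
   then B/r still has spectral radius < 1, so its powers are bounded (via the Jordan normal
   form), and B^k = r^k (B/r)^k. *)
lemma eigenvalue_entry_decay:
  fixes B :: "complex mat"
  assumes B: "B \<in> carrier_mat n n" and n: "0 < n"
    and ev: "\<And>l. eigenvalue B l \<Longrightarrow> norm l < 1"
  shows "\<exists>c r. 0 \<le> c \<and> 0 < r \<and> r < 1 \<and>
    (\<forall>k i j. i < n \<longrightarrow> j < n \<longrightarrow> norm ((B ^\<^sub>m k) $$ (i, j)) \<le> c * r ^ k)"
proof -
  define s where "s = spectral_radius B"
  have "s \<in> norm ` spectrum B"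
    using spectral_radius_mem_max(1)[OF B n] by (simp add: s_def)
  then have s: "0 \<le> s" "s < 1" using ev by (auto simp: spectrum_def)
  define r where "r = (1 + s) / 2"
  have r: "0 < r" "r < 1" "s < r" using s by (auto simp: r_def)
  define B' where "B' = complex_of_real (1 / r) \<cdot>\<^sub>m B"
  have B': "B' \<in> carrier_mat n n" by (simp add: B'_def B)
  have B_B': "B = complex_of_real r \<cdot>\<^sub>m B'"
    using r B by (auto simp: B'_def intro!: eq_matI)
  have "norm l < 1" if "eigenvalue B' l" for l
  proof -
    have "eigenvalue B (complex_of_real r * l)"
      using eigenvalue_smult_mat[OF B' that] B_B' by simp
    then have "norm (complex_of_real r * l) \<le> s"
      using spectral_radius_mem_max(2)[OF B n] unfolding s_def spectrum_def by blast
    then have "r * norm l \<le> s" using r by (simp add: norm_mult)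
    then have "r * norm l < r * 1" using r(3) by linarith
    then show ?thesis using r(1) by simp
  qed
  then have "spectral_radius B' < 1"
    using spectral_radius_mem_max(1)[OF B' n] by (auto simp: spectrum_def)
  then obtain c where c: "\<And>k. norm_bound (B' ^\<^sub>m k) c"
    using spectral_radius_jnf_norm_bound_less_1_upper_triangular[OF B'] by blast
  have "0 < dim_row (B' ^\<^sub>m 0)" "0 < dim_col (B' ^\<^sub>m 0)" using n B' by auto
  then have "norm ((B' ^\<^sub>m 0) $$ (0, 0)) \<le> c"
    using c[of 0] unfolding norm_bound_def by blast
  then have c0: "0 \<le> c" by (meson norm_ge_zero order_trans)
  have "norm ((B ^\<^sub>m k) $$ (i, j)) \<le> c * r ^ k" if "i < n" "j < n" for k i j
  proof -
    have "norm ((B ^\<^sub>m k) $$ (i, j)) = r ^ k * norm ((B' ^\<^sub>m k) $$ (i, j))"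
      using that B' r by (simp add: B_B' pow_smult_mat norm_mult norm_power)
    also have "\<dots> \<le> r ^ k * c"
      using c[of k] that B' r unfolding norm_bound_def by (intro mult_left_mono) auto
    finally show ?thesis by (simp add: mult.commute)
  qed
  then show ?thesis using c0 r by blast
qed

(* To apply the Jordan normal form library to matrices indexed by a finite type 'n we fix
   an enumeration of 'n by the numbers 0, ..., CARD('n) - 1 and transport vectors and
   matrices along it. *)
definition coord_index :: "'n::finite \<Rightarrow> nat" where
  "coord_index = (SOME h. bij_betw h UNIV {0..<CARD('n)})"

definition coord :: "nat \<Rightarrow> 'n::finite" where
  "coord = inv_into UNIV coord_index"

lemma bij_coord_index: "bij_betw (coord_index :: 'n::finite \<Rightarrow> nat) UNIV {0..<CARD('n)}"
proof -
  obtain h :: "'n \<Rightarrow> nat" where "bij_betw h UNIV {0..<CARD('n)}"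
    using ex_bij_betw_finite_nat[of "UNIV :: 'n set"] by auto
  then show ?thesis unfolding coord_index_def by (metis someI_ex)
qed

lemma bij_coord: "bij_betw (coord :: nat \<Rightarrow> 'n::finite) {0..<CARD('n)} UNIV"
  unfolding coord_def by (rule bij_betw_inv_into[OF bij_coord_index])

lemma coord_index_less [simp]: "coord_index (a :: 'n::finite) < CARD('n)"
  using bij_coord_index[where 'n = 'n] by (auto simp: bij_betw_def)

lemma coord_coord_index [simp]: "coord (coord_index a) = (a :: 'n::finite)"
  using bij_coord_index[where 'n = 'n] unfolding coord_def by (metis bij_betw_def inv_f_f)

lemma coord_index_coord [simp]: "i < CARD('n) \<Longrightarrow> coord_index (coord i :: 'n::finite) = i"
  using bij_coord_index[where 'n = 'n] unfolding coord_def bij_betw_def by (auto intro!: f_inv_into_f)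

lemma sum_over_coords: "(\<Sum>j\<in>{0..<CARD('n)}. f (coord j :: 'n::finite)) = (\<Sum>a\<in>UNIV. f a)"
  by (rule sum.reindex_bij_betw[OF bij_coord])

definition vec_of_hma :: "'a ^ 'n::finite \<Rightarrow> 'a Matrix.vec" where
  "vec_of_hma x = Matrix.vec CARD('n) (\<lambda>i. x $ coord i)"

definition mat_of_hma :: "'a ^ 'n::finite ^ 'n \<Rightarrow> 'a mat" where
  "mat_of_hma A = Matrix.mat CARD('n) CARD('n) (\<lambda>(i, j). A $ coord i $ coord j)"

lemma vec_of_hma_carrier [simp]: "vec_of_hma (x :: 'a ^ 'n::finite) \<in> carrier_vec CARD('n)"
  by (simp add: vec_of_hma_def)

lemma mat_of_hma_carrier [simp]: "mat_of_hma (A :: 'a ^ 'n::finite ^ 'n) \<in> carrier_mat CARD('n) CARD('n)"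
  by (simp add: mat_of_hma_def)

lemma vec_of_hma_inj:
  assumes "vec_of_hma x = vec_of_hma (y :: 'a ^ 'n::finite)"
  shows "x = y"
proof -
  have "x $ a = y $ a" for a
    using arg_cong[OF assms, of "\<lambda>v. vec_index v (coord_index a)"] by (simp add: vec_of_hma_def)
  then show ?thesis by (simp add: Finite_Cartesian_Product.vec_eq_iff)
qed

lemma mat_of_hma_mult_vec:
  fixes A :: "'a::comm_semiring_1 ^ 'n::finite ^ 'n"
  shows "mat_of_hma A *\<^sub>v vec_of_hma x = vec_of_hma (A *v x)"
proof (rule eq_vecI)
  fix i assume "i < dim_vec (vec_of_hma (A *v x))"
  then have i: "i < CARD('n)" by (simp add: vec_of_hma_def)
  have "vec_index (mat_of_hma A *\<^sub>v vec_of_hma x) i = (\<Sum>j\<in>{0..<CARD('n)}. A $ coord i $ coord j * x $ coord j)"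
    using i by (simp add: mat_of_hma_def vec_of_hma_def scalar_prod_def)
  also have "\<dots> = (A *v x) $ coord i"
    by (simp add: sum_over_coords[of "\<lambda>b. A $ coord i $ b * x $ b"] matrix_vector_mult_def)
  finally show "vec_index (mat_of_hma A *\<^sub>v vec_of_hma x) i = vec_index (vec_of_hma (A *v x)) i"
    using i by (simp add: vec_of_hma_def)
qed (simp add: mat_of_hma_def vec_of_hma_def)

lemma mat_of_hma_pow_mult_vec:
  fixes A :: "'a::comm_semiring_1 ^ 'n::finite ^ 'n"
  shows "(mat_of_hma A ^\<^sub>m k) *\<^sub>v vec_of_hma x = vec_of_hma (((*v) A ^^ k) x)"
proof (induction k arbitrary: x)
  case 0
  show ?case by (simp add: mat_of_hma_def)
next
  case (Suc k)
  have "(mat_of_hma A ^\<^sub>m Suc k) *\<^sub>v vec_of_hma x = (mat_of_hma A ^\<^sub>m k) *\<^sub>v vec_of_hma (A *v x)"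
    using assoc_mult_mat_vec[OF pow_carrier_mat[OF mat_of_hma_carrier] mat_of_hma_carrier
        vec_of_hma_carrier, of A k A x]
    by (simp add: mat_of_hma_mult_vec)
  also have "\<dots> = vec_of_hma (((*v) A ^^ Suc k) x)"
    by (simp add: Suc funpow_Suc_right del: funpow.simps)
  finally show ?case .
qed

lemma eigenvalue_mat_of_hma:
  fixes C :: "complex ^ 'n::finite ^ 'n"
  assumes "eigenvalue (mat_of_hma C) l"
  shows "\<exists>w. w \<noteq> 0 \<and> C *v w = l *s w"
proof -
  obtain v where v: "v \<in> carrier_vec CARD('n)" "v \<noteq> 0\<^sub>v CARD('n)" "mat_of_hma C *\<^sub>v v = l \<cdot>\<^sub>v v"
    using assms unfolding eigenvalue_def eigenvector_def by (auto simp: mat_of_hma_def)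
  define w :: "complex ^ 'n" where "w = (\<chi> a. vec_index v (coord_index a))"
  have vw: "vec_of_hma w = v"
    using v(1) by (intro eq_vecI) (auto simp: vec_of_hma_def w_def)
  have "vec_of_hma (l *s w) = l \<cdot>\<^sub>v vec_of_hma w"
    by (intro eq_vecI) (simp_all add: vec_of_hma_def)
  then have "vec_of_hma (C *v w) = vec_of_hma (l *s w)"
    using v(3) by (simp add: mat_of_hma_mult_vec[symmetric] vw)
  then have "C *v w = l *s w" by (rule vec_of_hma_inj)
  moreover have "w \<noteq> 0"
  proof
    assume "w = 0"
    then have "v = 0\<^sub>v CARD('n)"
      using vw by (intro eq_vecI) (auto simp: vec_of_hma_def)
    then show False using v(2) by simp
  qed
  ultimately show ?thesis by blast
qed

definition cvec :: "real ^ 'n \<Rightarrow> complex ^ 'n" where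
  "cvec x = (\<chi> i. complex_of_real (x $ i))"

lemma cmat_mult_cvec: "cmat A *v cvec x = cvec (A *v x)"
  by (simp add: cmat_def cvec_def matrix_vector_mult_def Finite_Cartesian_Product.vec_eq_iff)

lemma cmat_funpow_cvec: "((*v) (cmat A) ^^ p) (cvec x) = cvec (((*v) A ^^ p) x)"
  by (induction p) (simp_all add: cmat_mult_cvec)

(* Main linear-algebra fact: if every complex eigenvalue of the real matrix A has modulus
   < 1, then the powers of A contract geometrically: |A^p d| <= C r^p |d| with r < 1.
   Each coordinate of A^p d is a sum of CARD('n) terms bounded via eigenvalue_entry_decay,
   and the Euclidean norm is bounded by the l1 norm. *)
lemma powers_decay:
  fixes A :: "real ^ 'n::finite ^ 'n"
  assumes ev: "\<And>c. is_eigenvalue A c \<Longrightarrow> norm c < 1"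
  shows "\<exists>C r. 0 \<le> C \<and> 0 < r \<and> r < 1 \<and> (\<forall>p d. norm (((*v) A ^^ p) d) \<le> C * r ^ p * norm d)"
proof -
  let ?N = "CARD('n)" and ?B = "mat_of_hma (cmat A)"
  have "norm l < 1" if "eigenvalue ?B l" for l
    using eigenvalue_mat_of_hma[OF that] ev unfolding is_eigenvalue_def by blast
  from eigenvalue_entry_decay[OF mat_of_hma_carrier zero_less_card_finite this]
  obtain c r where cr: "0 \<le> c" "0 < r" "r < 1"
    and bnd: "\<And>k i j. i < ?N \<Longrightarrow> j < ?N \<Longrightarrow> norm ((?B ^\<^sub>m k) $$ (i, j)) \<le> c * r ^ k"
    by blast
  have coord_bound: "\<bar>((*v) A ^^ p) d $ a\<bar> \<le> ?N * (c * r ^ p * norm d)" for p d a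
  proof -
    have "\<bar>((*v) A ^^ p) d $ a\<bar> = norm (vec_index (vec_of_hma (cvec (((*v) A ^^ p) d))) (coord_index a))"
      by (simp add: vec_of_hma_def cvec_def)
    also have "\<dots> = norm (vec_index ((?B ^\<^sub>m p) *\<^sub>v vec_of_hma (cvec d)) (coord_index a))"
      by (simp add: mat_of_hma_pow_mult_vec cmat_funpow_cvec)
    also have "\<dots> = norm (\<Sum>j\<in>{0..<?N}. (?B ^\<^sub>m p) $$ (coord_index a, j) * complex_of_real (d $ coord j))"
      by (simp add: scalar_prod_def vec_of_hma_def cvec_def mat_of_hma_def)
    also have "\<dots> \<le> (\<Sum>j\<in>{0..<?N}. c * r ^ p * norm d)"
    proof (rule order_trans[OF norm_sum sum_mono])
      fix j assume "j \<in> {0..<?N}"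
      then show "norm ((?B ^\<^sub>m p) $$ (coord_index a, j) * complex_of_real (d $ coord j)) \<le> c * r ^ p * norm d"
        using bnd cr unfolding norm_mult
        by (intro mult_mono) (auto simp: component_le_norm_cart)
    qed
    finally show ?thesis by simp
  qed
  have "norm (((*v) A ^^ p) d) \<le> (?N * ?N * c) * r ^ p * norm d" for p d
  proof -
    have "norm (((*v) A ^^ p) d) \<le> (\<Sum>a\<in>UNIV. \<bar>((*v) A ^^ p) d $ a\<bar>)"
      by (rule norm_le_l1_cart)
    also have "\<dots> \<le> (\<Sum>a\<in>(UNIV :: 'n set). ?N * (c * r ^ p * norm d))"
      by (intro sum_mono coord_bound)
    finally show ?thesis by (simp add: ac_simps)
  qed
  then show ?thesis using cr by (intro exI[of _ "?N * ?N * c"] exI[of _ r]) auto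
qed

lemma cmat_mult: "cmat (A ** B) = cmat A ** cmat (B :: real ^ 'n ^ 'n)"
  by (simp add: cmat_def matrix_matrix_mult_def Finite_Cartesian_Product.vec_eq_iff)

lemma cmat_one: "cmat (mat 1 :: real ^ 'n ^ 'n) = mat 1"
  by (simp add: cmat_def Finite_Cartesian_Product.mat_def Finite_Cartesian_Product.vec_eq_iff)

lemma is_eigenvalue_inverse:
  fixes A B :: "real ^ 'n ^ 'n"
  assumes inv: "B ** A = mat 1" and ev: "is_eigenvalue A l"
  shows "l \<noteq> 0 \<and> is_eigenvalue B (inverse l)"
proof -
  obtain w where w: "w \<noteq> 0" "cmat A *v w = l *s w"
    using ev unfolding is_eigenvalue_def by blast
  have "w = cmat B *v (cmat A *v w)"
    by (simp add: matrix_vector_mul_assoc cmat_mult[symmetric] inv cmat_one)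
  also have "\<dots> = l *s (cmat B *v w)"
    by (simp add: w(2) vector_scalar_commute)
  finally have w_eq: "w = l *s (cmat B *v w)" .
  then have l: "l \<noteq> 0" using w(1) by auto
  have "cmat B *v w = inverse l *s w"
    using arg_cong[OF w_eq, of "\<lambda>x. inverse l *s x"] l by (simp add: vector_smult_assoc)
  then show ?thesis using l w(1) unfolding is_eigenvalue_def by blast
qed

lemma int_vecs_zero: "0 \<in> int_vecs"
  by (simp add: int_vecs_def)

lemma int_vecs_add: "x \<in> int_vecs \<Longrightarrow> y \<in> int_vecs \<Longrightarrow> x + y \<in> int_vecs"
  by (simp add: int_vecs_def)

lemma int_vecs_diff: "x \<in> int_vecs \<Longrightarrow> y \<in> int_vecs \<Longrightarrow> x - y \<in> int_vecs"
  by (simp add: int_vecs_def)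

lemma int_vecs_mult: "(\<And>i j. M $ i $ j \<in> \<int>) \<Longrightarrow> v \<in> int_vecs \<Longrightarrow> M *v v \<in> int_vecs"
  by (simp add: int_vecs_def matrix_vector_mult_def Ints_sum Ints_mult)

lemma finite_int_vecs_ball: "finite {v \<in> int_vecs. norm (v :: real ^ 'n) \<le> R}"
proof -
  let ?S = "{k \<in> \<int>. \<bar>k\<bar> \<le> R}"
  have "{v \<in> int_vecs. norm (v :: real ^ 'n) \<le> R} \<subseteq> vec_lambda ` (PiE UNIV (\<lambda>_. ?S))"
  proof
    fix v :: "real ^ 'n" assume v: "v \<in> {v \<in> int_vecs. norm v \<le> R}"
    have "\<bar>v $ i\<bar> \<le> R" for i
      using v component_le_norm_cart[of v i] by simp
    then have "vec_nth v \<in> PiE UNIV (\<lambda>_. ?S)"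
      using v by (simp add: int_vecs_def PiE_iff)
    then show "v \<in> vec_lambda ` (PiE UNIV (\<lambda>_. ?S))"
      using image_eqI[of v vec_lambda "vec_nth v"] by (simp add: vec_nth_inverse)
  qed
  moreover have "finite (PiE (UNIV :: 'n set) (\<lambda>_. ?S))"
    by (simp add: finite_PiE finite_abs_int_segment)
  ultimately show ?thesis by (rule finite_subset[OF _ finite_imageI])
qed

(* For a word w = i_1 ... i_p the map f_w = f_{i_1} o ... o f_{i_p}, where
   f_i x = A (x + k i); with A = M^{-1} this is the composition of the IFS maps. *)
definition word_map :: "real ^ 'n ^ 'n \<Rightarrow> (nat \<Rightarrow> real ^ 'n) \<Rightarrow> nat list \<Rightarrow> real ^ 'n \<Rightarrow> real ^ 'n" where
  "word_map A k w x = foldr (\<lambda>i y. A *v (y + k i)) w x"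

lemma word_map_Nil [simp]: "word_map A k [] x = x"
  by (simp add: word_map_def)

lemma word_map_Cons [simp]: "word_map A k (i # w) x = A *v (word_map A k w x + k i)"
  by (simp add: word_map_def)

lemma word_map_diff: "word_map A k w x - word_map A k w y = ((*v) A ^^ length w) (x - y)"
  by (induction w) (simp_all add: matrix_vector_mult_diff_distrib[symmetric])

(* In the standing setting M is invertible: the residue system is nonempty, so m >= 1 and
   det M <> 0. *)
lemma sa_inverse:
  assumes "sa_setting M m k T"
  shows "M ** matrix_inv M = mat 1" and "matrix_inv M ** M = mat 1"
proof -
  have res: "\<forall>z\<in>int_vecs. \<exists>!j. j \<in> {1..m} \<and> (\<exists>w\<in>int_vecs. z - (k j - k 1) = M *v w)"
    and m: "real m = \<bar>det M\<bar>" using assms by (simp_all add: sa_setting_def)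
  obtain j where "j \<in> {1..m}" using res int_vecs_zero by blast
  then have "1 \<le> m" by simp
  then have "invertible M" using m by (simp add: invertible_det_nz)
  then have "\<exists>A. M ** A = mat 1 \<and> A ** M = mat 1" by (simp add: invertible_def)
  from someI_ex[OF this] show "M ** matrix_inv M = mat 1" "matrix_inv M ** M = mat 1"
    by (simp_all add: matrix_inv_def)
qed

lemma sa_attractor_iff:
  assumes "sa_setting M m k T"
  shows "x \<in> T \<longleftrightarrow> (\<exists>j\<in>{1..m}. \<exists>y\<in>T. x = matrix_inv M *v (y + k j))"
proof -
  have T_eq: "T = (\<Union>j\<in>{1..m}. (\<lambda>y. matrix_inv M *v (y + k j)) ` T)"
    using assms by (simp add: sa_setting_def)
  have "x \<in> T \<longleftrightarrow> x \<in> (\<Union>j\<in>{1..m}. (\<lambda>y. matrix_inv M *v (y + k j)) ` T)"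
    by (subst T_eq[symmetric]) (rule refl)
  also have "\<dots> \<longleftrightarrow> (\<exists>j\<in>{1..m}. \<exists>y\<in>T. x = matrix_inv M *v (y + k j))"
    by blast
  finally show ?thesis .
qed

lemma sa_word_map_into_T:
  assumes S: "sa_setting M m k T" and "set w \<subseteq> {1..m}" and "x \<in> T"
  shows "word_map (matrix_inv M) k w x \<in> T"
  using assms(2)
proof (induction w)
  case Nil
  then show ?case using assms(3) by simp
next
  case (Cons i w)
  then have "i \<in> {1..m}" and "word_map (matrix_inv M) k w x \<in> T" by auto
  then have "matrix_inv M *v (word_map (matrix_inv M) k w x + k i) \<in> T"
    using sa_attractor_iff[OF S, of "matrix_inv M *v (word_map (matrix_inv M) k w x + k i)"] by blast
  then show ?case by simp
qed

lemma sa_word_cover: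
  assumes S: "sa_setting M m k T" and "x \<in> T"
  shows "\<exists>w. length w = p \<and> set w \<subseteq> {1..m} \<and> x \<in> word_map (matrix_inv M) k w ` T"
  using assms(2)
proof (induction p arbitrary: x)
  case 0
  then show ?case by auto
next
  case (Suc p)
  then obtain j y where j: "j \<in> {1..m}" and y: "y \<in> T" and x: "x = matrix_inv M *v (y + k j)"
    using sa_attractor_iff[OF S] by blast
  from Suc.IH[OF y] obtain w z where w: "length w = p" "set w \<subseteq> {1..m}"
    and z: "z \<in> T" "y = word_map (matrix_inv M) k w z" by blast
  have "x = word_map (matrix_inv M) k (j # w) z" using x z(2) by simp
  then show ?case using j w z(1) by (intro exI[of _ "j # w"]) auto
qed

lemma sa_digit_diff:
  assumes "sa_setting M m k T" and "i \<in> {1..m}" and "j \<in> {1..m}"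
  shows "k j - k i \<in> int_vecs"
proof -
  have "k j - k 1 \<in> int_vecs" "k i - k 1 \<in> int_vecs"
    using assms by (simp_all add: sa_setting_def)
  then show ?thesis using int_vecs_diff by fastforce
qed

(* The identity behind the edges of the neighbor graph: for v' = M v + k j - k i,
   f_i(y + v') = f_j(y) + v. *)
lemma sa_edge_shift:
  assumes "sa_setting M m k T"
  shows "matrix_inv M *v (y + (M *v v + k j - k i) + k i) = matrix_inv M *v (y + k j) + v"
proof -
  have "y + (M *v v + k j - k i) + k i = (y + k j) + M *v v" by (simp add: algebra_simps)
  then show ?thesis
    by (simp add: matrix_vector_right_distrib matrix_vector_mul_assoc sa_inverse[OF assms])
qed

lemma path_word_iff_overlap:
  assumes S: "sa_setting M m k T" and "v \<in> int_vecs" and "set w \<subseteq> {1..m}"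
  shows "path_word M m k T v w \<longleftrightarrow> word_map (matrix_inv M) k w ` T \<inter> (\<lambda>x. x + v) ` T \<noteq> {}"
  using assms(2,3)
proof (induction w arbitrary: v)
  case Nil
  then show ?case by (auto simp: nb_vertices_def Bset_def)
next
  case (Cons i w)
  let ?A = "matrix_inv M" and ?f = "word_map (matrix_inv M) k"
  have i: "i \<in> {1..m}" and w: "set w \<subseteq> {1..m}" using Cons.prems by auto
  show ?case
  proof
    assume "path_word M m k T v (i # w)"
    then obtain v' j where j: "j \<in> {1..m}" and v': "v' = M *v v + k j - k i" "v' \<in> nb_vertices T"
      and path: "path_word M m k T v' w"
      by (auto simp: nb_edge_def)
    have "v' \<in> int_vecs" using v'(2) by (simp add: nb_vertices_def)
    then obtain z t where z: "z \<in> T" and t: "t \<in> T" and zt: "?f w z = t + v'"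
      using Cons.IH w path by blast
    have "?f (i # w) z = ?A *v (t + k j) + v"
      using zt v'(1) sa_edge_shift[OF S] by simp
    moreover have "?A *v (t + k j) \<in> T"
      using sa_attractor_iff[OF S] j t by blast
    ultimately show "?f (i # w) ` T \<inter> (\<lambda>x. x + v) ` T \<noteq> {}" using z by blast
  next
    assume "?f (i # w) ` T \<inter> (\<lambda>x. x + v) ` T \<noteq> {}"
    then obtain z t where z: "z \<in> T" and t: "t \<in> T" and zt: "?f (i # w) z = t + v" by auto
    obtain j s where j: "j \<in> {1..m}" and s: "s \<in> T" and ts: "t = ?A *v (s + k j)"
      using sa_attractor_iff[OF S] t by blast
    define v' where "v' = M *v v + k j - k i"
    have "?A *v (?f w z + k i) = ?A *v (s + v' + k i)"
      using zt ts sa_edge_shift[OF S] by (simp add: v'_def)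
    then have "M *v (?A *v (?f w z + k i)) = M *v (?A *v (s + v' + k i))" by simp
    then have fz: "?f w z = s + v'"
      by (simp add: matrix_vector_mul_assoc sa_inverse[OF S])
    have "v' = M *v v + (k j - k i)" by (simp add: v'_def)
    moreover have "M *v v \<in> int_vecs"
      using S Cons.prems(1) by (intro int_vecs_mult) (simp_all add: sa_setting_def)
    ultimately have v'_int: "v' \<in> int_vecs"
      using int_vecs_add sa_digit_diff[OF S i j] by simp
    have "?f w z \<in> T" using sa_word_map_into_T[OF S w z] .
    then have v'_vertex: "v' \<in> nb_vertices T"
      using v'_int fz s by (auto simp: nb_vertices_def Bset_def)
    have path: "path_word M m k T v' w"
      using Cons.IH[OF v'_int w] fz s z by blast
    have "?f (i # w) z \<in> T" using sa_word_map_into_T[OF S Cons.prems(2) z] .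
    then have "v \<in> nb_vertices T"
      using Cons.prems(1) zt t by (auto simp: nb_vertices_def Bset_def)
    then have "nb_edge M m k T v v' i"
      using v'_vertex i j unfolding nb_edge_def v'_def by blast
    then show "path_word M m k T v (i # w)" using path by auto
  qed
qed

lemma sa_inverse_eigenvalues:
  assumes S: "sa_setting M m k T" and ev: "is_eigenvalue (matrix_inv M) l"
  shows "norm l < 1"
proof -
  have "l \<noteq> 0" and "is_eigenvalue M (inverse l)"
    using is_eigenvalue_inverse[OF sa_inverse(1)[OF S] ev] by auto
  then have "1 < norm (inverse l)"
    using S unfolding sa_setting_def by blast
  then have "1 < inverse (norm l)" by (simp add: norm_inverse)
  then show ?thesis by (simp add: one_less_inverse_iff)
qed

(* Every point x of T lies in arbitrarily small pieces f_w(T): their diameters are at most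
   C r^|w| diam T by powers_decay. *)
lemma sa_small_word_image:
  assumes S: "sa_setting M m k T" and x: "x \<in> T" and r: "0 < r"
  shows "\<exists>w. set w \<subseteq> {1..m} \<and> x \<in> word_map (matrix_inv M) k w ` T \<and>
    word_map (matrix_inv M) k w ` T \<subseteq> ball x r"
proof -
  let ?f = "word_map (matrix_inv M) k"
  have "bounded T" using S by (simp add: sa_setting_def compact_imp_bounded)
  then obtain R where R0: "0 < R" and R: "\<And>t. t \<in> T \<Longrightarrow> norm t \<le> R"
    by (auto simp: bounded_pos)
  obtain C q where Cq: "0 \<le> C" "0 < q" "q < 1"
    and contr: "\<And>p d. norm (((*v) (matrix_inv M) ^^ p) d) \<le> C * q ^ p * norm d"
    using powers_decay[OF sa_inverse_eigenvalues[OF S]] by blast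
  define K where "K = C * (2 * R) + 1"
  have K0: "0 < K" using Cq R0 by (simp add: K_def add_nonneg_pos)
  obtain p where p: "q ^ p < r / K"
    using real_arch_pow_inv[of "r / K" q] r K0 Cq by auto
  obtain w z where w: "length w = p" "set w \<subseteq> {1..m}" and z: "z \<in> T" and xz: "x = ?f w z"
    using sa_word_cover[OF S x, of p] by blast
  have "?f w t \<in> ball x r" if t: "t \<in> T" for t
  proof -
    have "dist x (?f w t) = norm (((*v) (matrix_inv M) ^^ p) (z - t))"
      using word_map_diff[of "matrix_inv M" k w z t] w(1) xz by (simp add: dist_norm)
    also have "\<dots> \<le> C * q ^ p * norm (z - t)" by (rule contr)
    also have "\<dots> \<le> C * q ^ p * (2 * R)"
      using R[OF z] R[OF t] norm_triangle_ineq4[of z t] Cq by (intro mult_left_mono) auto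
    also have "\<dots> \<le> K * q ^ p" using Cq by (simp add: K_def algebra_simps)
    also have "\<dots> < K * (r / K)" using p K0 by (intro mult_strict_left_mono)
    also have "\<dots> = r" using K0 by simp
    finally show ?thesis by simp
  qed
  then show ?thesis using w(2) z xz by blast
qed

(* Translations written as (+) v, the form used by the library lemmas. *)
lemma translate_right: "(\<lambda>y. y + v) ` S = (+) v ` S" for v :: "'a::ab_semigroup_add"
  by (simp add: add.commute)

lemma closed_translate_right: "closed S \<Longrightarrow> closed ((\<lambda>y. y + v) ` S)" for v :: "'a::real_normed_vector"
  unfolding translate_right by (rule closed_translation)

(* Lattice translates of a compact set are locally finite: a point lying in no T + v with
   v in Z^n - S has an open neighbourhood meeting none of these translates (only the
   finitely many v with |v| <= |x| + 1 + sup |T| can come close). *)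
lemma lattice_translates_locally_finite:
  fixes T :: "(real ^ 'n) set"
  assumes T: "compact T" and x: "\<And>v. v \<in> int_vecs - S \<Longrightarrow> x \<notin> (\<lambda>y. y + v) ` T"
  obtains U where "open U" and "x \<in> U"
    and "\<forall>v\<in>int_vecs - S. U \<inter> (\<lambda>y. y + v) ` T = {}"
proof -
  obtain R where R: "\<And>t. t \<in> T \<Longrightarrow> norm t \<le> R"
    using compact_imp_bounded[OF T] by (auto simp: bounded_iff)
  define A where "A = {v \<in> int_vecs. norm (v :: real ^ 'n) \<le> norm x + 1 + R}"
  define U where "U = ball x 1 - (\<Union>v\<in>A - S. (\<lambda>y. y + v) ` T)"
  have "finite A" unfolding A_def by (rule finite_int_vecs_ball)
  then have "open U"
    unfolding U_def using compact_imp_closed[OF T]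
    by (intro open_Diff closed_UN) (auto intro: closed_translate_right)
  moreover have "x \<in> U" using x by (auto simp: U_def A_def)
  moreover have "U \<inter> (\<lambda>y. y + v) ` T = {}" if v: "v \<in> int_vecs - S" for v
  proof (intro equals0I)
    fix y assume "y \<in> U \<inter> (\<lambda>y. y + v) ` T"
    then obtain t where y: "y \<in> U" and t: "t \<in> T" and yt: "y = t + v" by auto
    have "norm (y - x) < 1" using y by (simp add: U_def dist_norm norm_minus_commute)
    then have "norm v \<le> norm x + 1 + R"
      using yt R[OF t] norm_triangle_ineq4[of y t] norm_triangle_ineq2[of y x] by simp
    then have "v \<in> A - S" using v by (simp add: A_def)
    then show False using y t yt by (auto simp: U_def)
  qed
  ultimately show ?thesis using that by blast
qed

lemma exposed_point_neighbourhood: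
  fixes T :: "(real ^ 'n) set"
  assumes T: "compact T"
    and exposed: "\<not> Bset T u \<subseteq> (\<Union>v\<in>nb_vertices T - {0, u}. Bset T v)"
  obtains x U where "x \<in> Bset T u" and "open U" and "x \<in> U"
    and "\<forall>v\<in>int_vecs - {0, u}. U \<inter> (\<lambda>y. y + v) ` T = {}"
proof -
  obtain x where x: "x \<in> Bset T u" "x \<notin> (\<Union>v\<in>nb_vertices T - {0, u}. Bset T v)"
    using exposed by blast
  have "x \<notin> (\<lambda>y. y + v) ` T" if v: "v \<in> int_vecs - {0, u}" for v
  proof
    assume "x \<in> (\<lambda>y. y + v) ` T"
    then have xv: "x \<in> Bset T v" using x(1) by (simp add: Bset_def)
    then have "v \<in> nb_vertices T - {0, u}" using v by (auto simp: nb_vertices_def)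
    then show False using x(2) xv by blast
  qed
  then obtain U where "open U" "x \<in> U" "\<forall>v\<in>int_vecs - {0, u}. U \<inter> (\<lambda>y. y + v) ` T = {}"
    by (rule lattice_translates_locally_finite[OF T])
  then show ?thesis using that x(1) by blast
qed

(* (b) implies (a): near an exposed point only T and T + u occur, so a neighbourhood is
   covered by T u (T + u) and its boundary points of T must lie in T + u. *)
lemma face_if_exposed:
  fixes T :: "(real ^ 'n) set"
  assumes T: "compact T" and tiling: "lattice_tiling T" and u: "u \<in> int_vecs"
    and exposed: "\<not> Bset T u \<subseteq> (\<Union>v\<in>nb_vertices T - {0, u}. Bset T v)"
  shows "is_face T u"
proof -
  obtain x U where x: "x \<in> Bset T u" and U: "open U" "x \<in> U"
    and avoid: "\<forall>v\<in>int_vecs - {0, u}. U \<inter> (\<lambda>y. y + v) ` T = {}"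
    by (rule exposed_point_neighbourhood[OF T exposed])
  have U_sub: "U \<subseteq> T \<union> (\<lambda>y. y + u) ` T"
  proof
    fix y assume y: "y \<in> U"
    obtain z where z: "z \<in> int_vecs" "y \<in> (\<lambda>x. x + z) ` T"
      using tiling unfolding lattice_tiling_def by blast
    then have "z = 0 \<or> z = u" using avoid y by blast
    then show "y \<in> T \<union> (\<lambda>y. y + u) ` T" using z(2) by auto
  qed
  have "U \<inter> frontier T \<subseteq> Bset T u"
  proof
    fix y assume y: "y \<in> U \<inter> frontier T"
    have yT: "y \<in> T" using y frontier_subset_closed[OF compact_imp_closed[OF T]] by blast
    have "y \<in> (\<lambda>y. y + u) ` T"
    proof (rule ccontr)
      assume y_u: "y \<notin> (\<lambda>y. y + u) ` T"
      have "open (U - (\<lambda>y. y + u) ` T)"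
        using U(1) compact_imp_closed[OF T] by (intro open_Diff closed_translate_right)
      moreover have "U - (\<lambda>y. y + u) ` T \<subseteq> T" using U_sub by blast
      ultimately have "y \<in> interior T" using y y_u by (meson DiffI IntD1 interiorI)
      then show False using y by (simp add: frontier_def)
    qed
    then show "y \<in> Bset T u" using yT by (simp add: Bset_def)
  qed
  then show ?thesis unfolding is_face_def using x U U_sub by blast
qed

(* (a) implies (b): if the face point x were in some B_v, the interior of T + v would come
   arbitrarily close to x, but near x there is no room left between the interiors of T and
   T + u, which are disjoint from that of T + v. *)
lemma exposed_if_face:
  fixes T :: "(real ^ 'n) set"
  assumes T: "closed T" and tiling: "lattice_tiling T" and u: "u \<in> int_vecs"
    and face: "is_face T u"
  shows "\<not> Bset T u \<subseteq> (\<Union>v\<in>nb_vertices T - {0, u}. Bset T v)"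
proof -
  obtain x U where x: "x \<in> Bset T u" and U: "open U" "x \<in> U"
    and U_sub: "U \<subseteq> T \<union> (\<lambda>y. y + u) ` T"
    using face unfolding is_face_def by blast
  have disjoint: "interior ((\<lambda>y. y + a) ` T) \<inter> interior ((\<lambda>y. y + b) ` T) = {}"
    if "a \<in> int_vecs" "b \<in> int_vecs" "a \<noteq> b" for a b
    using tiling that unfolding lattice_tiling_def by blast
  have "x \<notin> Bset T v" if v: "v \<in> nb_vertices T - {0, u}" for v
  proof
    assume "x \<in> Bset T v"
    have v_int: "v \<in> int_vecs" using v by (simp add: nb_vertices_def)
    let ?Tv = "(\<lambda>y. y + v) ` T"
    have "?Tv = closure (interior ?Tv)"
      using tiling unfolding lattice_tiling_def translate_right interior_translation closure_translation
      by simp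
    then have "x \<in> closure (interior ?Tv)" using \<open>x \<in> Bset T v\<close> by (simp add: Bset_def)
    then have nonempty: "U \<inter> interior ?Tv \<noteq> {}"
      using open_Int_closure_eq_empty[OF U(1)] U(2) by blast
    define V where "V = U \<inter> interior ?Tv"
    have "open V" unfolding V_def using U(1) by blast
    have "V - T \<subseteq> interior ((\<lambda>y. y + u) ` T)"
      using U_sub \<open>open V\<close> T unfolding V_def by (intro interior_maximal) auto
    then have "V - T = {}"
      using disjoint[OF u v_int] v unfolding V_def by blast
    then have "V \<subseteq> interior T" using \<open>open V\<close> by (simp add: interior_maximal)
    then have "V = {}"
      using disjoint[OF int_vecs_zero v_int] v unfolding V_def by auto
    then show False using nonempty unfolding V_def by simp
  qed
  then show ?thesis using x by blast
qed

(* (c) implies (b): a common point of f_w(T) and T + u lies in B_u, and it lies in no other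
   B_v because otherwise w would label a path from v. *)
lemma exposed_if_word:
  assumes S: "sa_setting M m k T" and u: "u \<in> int_vecs"
    and w: "set w \<subseteq> {1..m}" "path_word M m k T u w"
    and others: "\<forall>v\<in>nb_vertices T - {0, u}. \<not> path_word M m k T v w"
  shows "\<not> Bset T u \<subseteq> (\<Union>v\<in>nb_vertices T - {0, u}. Bset T v)"
proof -
  obtain x where x: "x \<in> word_map (matrix_inv M) k w ` T" "x \<in> (\<lambda>y. y + u) ` T"
    using path_word_iff_overlap[OF S u w(1)] w(2) by blast
  have "x \<in> T" using x(1) sa_word_map_into_T[OF S w(1)] by blast
  then have x_u: "x \<in> Bset T u" using x(2) by (simp add: Bset_def)
  have "x \<notin> Bset T v" if v: "v \<in> nb_vertices T - {0, u}" for v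
  proof
    assume "x \<in> Bset T v"
    moreover have "v \<in> int_vecs" using v by (simp add: nb_vertices_def)
    ultimately have "path_word M m k T v w"
      using x(1) path_word_iff_overlap[OF S _ w(1), of v] by (auto simp: Bset_def)
    then show False using others v by blast
  qed
  then show ?thesis using x_u by blast
qed

(* (b) implies (c): choose a neighbourhood U of an exposed point meeting only T and T + u,
   and a word w whose piece f_w(T) contains the point and lies inside U; then f_w(T) meets
   T + u but no T + v with v in V - {0, u}. *)
lemma word_if_exposed:
  assumes S: "sa_setting M m k T" and u: "u \<in> int_vecs"
    and exposed: "\<not> Bset T u \<subseteq> (\<Union>v\<in>nb_vertices T - {0, u}. Bset T v)"
  shows "\<exists>w. set w \<subseteq> {1..m} \<and> path_word M m k T u w \<and>
    (\<forall>v\<in>nb_vertices T - {0, u}. \<not> path_word M m k T v w)"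
proof -
  have T: "compact T" using S by (simp add: sa_setting_def)
  obtain x U where x: "x \<in> Bset T u" and U: "open U" "x \<in> U"
    and avoid: "\<forall>v\<in>int_vecs - {0, u}. U \<inter> (\<lambda>y. y + v) ` T = {}"
    by (rule exposed_point_neighbourhood[OF T exposed])
  obtain r where r: "0 < r" "ball x r \<subseteq> U" using U open_contains_ball by blast
  have "x \<in> T" using x by (simp add: Bset_def)
  then obtain w where w: "set w \<subseteq> {1..m}" "x \<in> word_map (matrix_inv M) k w ` T"
    and small: "word_map (matrix_inv M) k w ` T \<subseteq> ball x r"
    using sa_small_word_image[OF S _ r(1)] by blast
  have "path_word M m k T u w"
    using path_word_iff_overlap[OF S u w(1)] w(2) x by (auto simp: Bset_def)
  moreover have "\<not> path_word M m k T v w" if v: "v \<in> nb_vertices T - {0, u}" for v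
  proof
    assume path: "path_word M m k T v w"
    have v_int: "v \<in> int_vecs" using v by (simp add: nb_vertices_def)
    then have "word_map (matrix_inv M) k w ` T \<inter> (\<lambda>y. y + v) ` T \<noteq> {}"
      using path_word_iff_overlap[OF S v_int w(1)] path by blast
    then have "U \<inter> (\<lambda>y. y + v) ` T \<noteq> {}" using small r(2) by blast
    then show False using avoid v_int v by blast
  qed
  ultimately show ?thesis using w(1) by blast
qed

theorem theorem9p3:
  fixes M :: "real ^ 'n ^ 'n" and m :: nat and k :: "nat \<Rightarrow> real ^ 'n"
    and T :: "(real ^ 'n) set" and u :: "real ^ 'n"
  assumes "sa_setting M m k T"
    and "lattice_tiling T"
    and "all_compatible M m k T"
    and "u \<in> nb_vertices T" and "u \<noteq> 0"
  shows "(is_face T u \<longleftrightarrow> \<not> Bset T u \<subseteq> (\<Union>v\<in>nb_vertices T - {0, u}. Bset T v))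
       \<and> (\<not> Bset T u \<subseteq> (\<Union>v\<in>nb_vertices T - {0, u}. Bset T v) \<longleftrightarrow>
           (\<exists>w::nat list. set w \<subseteq> {1..m} \<and> path_word M m k T u w \<and>
              (\<forall>v\<in>nb_vertices T - {0, u}. \<not> path_word M m k T v w)))"
proof -
  have T: "compact T" using assms(1) by (simp add: sa_setting_def)
  have u: "u \<in> int_vecs" using assms(4) by (simp add: nb_vertices_def)
  have "is_face T u \<longleftrightarrow> \<not> Bset T u \<subseteq> (\<Union>v\<in>nb_vertices T - {0, u}. Bset T v)"
    using face_if_exposed[OF T assms(2) u] exposed_if_face[OF compact_imp_closed[OF T] assms(2) u]
    by blast
  moreover have "\<not> Bset T u \<subseteq> (\<Union>v\<in>nb_vertices T - {0, u}. Bset T v) \<longleftrightarrow>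
      (\<exists>w. set w \<subseteq> {1..m} \<and> path_word M m k T u w \<and>
        (\<forall>v\<in>nb_vertices T - {0, u}. \<not> path_word M m k T v w))"
    using word_if_exposed[OF assms(1) u] exposed_if_word[OF assms(1) u] by blast
  ultimately show ?thesis by blast
qed

end
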